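(* Let $m\le k\le n$ be positive integers and $\mathbf a_1,\dots,\mathbf a_n\in\mathbb R^m$. Let $w^*=\max\{[\det(\sum_{i\in S}\mathbf a_i\mathbf a_i^\top)]^{1/m}: S\subseteq[n],\ |S|=k\}$, and let $(\hat{\mathbf x},\hat w)$ be an optimal solution of the convex relaxation $$\hat w=\max_{\mathbf x,w}\Big\{w:\ w\le \Big[\det\Big(\sum_{i\in[n]}x_i\mathbf a_i\mathbf a_i^\top\Big)\Big]^{1/m},\ \sum_{i\in[n]}x_i=k,\ \mathbf x\in[0,1]^n\Big\}.$$ Let $\alpha\in(0,1]$ and let $\mu$ be a probability distribution on the subsets of $[n]$ of size $k$ which is $m$-wise $\alpha$-positively correlated with respect to $\hat{\mathbf x}$, i.e. for a random set $\mathcal S\sim\mu$ and every $T\subseteq[n]$ with $|T|=m$ we have $\Pr[T\subseteq\mathcal S]\ge \alpha^m\prod_{i\in T}\hat x_i$. Then $$\Big\{\mathbb E\Big[\det\Big(\sum_{i\in\mathcal S}\mathbf a_i\mathbf a_i^\top\Big)\Big]\Big\}^{1/m}\ge \alpha\, w^*.$$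
   Context: $[n]=\{1,\dots,n\}$. The expectation is with respect to $\mathcal S\sim\mu$. *)

theory Defs
  imports "HOL-Analysis.Analysis" "HOL-Probability.Probability"
begin

definition outer :: "real^'m \<Rightarrow> real^'m^'m" where
  "outer v = (\<chi> r c. v $ r * v $ c)"

definition wmat :: "(nat \<Rightarrow> real^'m) \<Rightarrow> nat set \<Rightarrow> (nat \<Rightarrow> real) \<Rightarrow> real^'m^'m" where
  "wmat a I x = (\<Sum>i\<in>I. x i *\<^sub>R outer (a i))"

definition smat :: "(nat \<Rightarrow> real^'m) \<Rightarrow> nat set \<Rightarrow> real^'m^'m" where
  "smat a S = (\<Sum>i\<in>S. outer (a i))"

definition wstar :: "nat \<Rightarrow> nat \<Rightarrow> (nat \<Rightarrow> real^'m) \<Rightarrow> real" where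
  "wstar n k a = Max {root CARD('m) (det (smat a S)) | S. S \<subseteq> {1..n} \<and> card S = k}"

definition relax_feasible :: "nat \<Rightarrow> nat \<Rightarrow> (nat \<Rightarrow> real^'m) \<Rightarrow> (nat \<Rightarrow> real) \<Rightarrow> real \<Rightarrow> bool" where
  "relax_feasible n k a x w \<longleftrightarrow>
     w \<le> root CARD('m) (det (wmat a {1..n} x)) \<and>
     (\<Sum>i\<in>{1..n}. x i) = real k \<and>
     (\<forall>i\<in>{1..n}. 0 \<le> x i \<and> x i \<le> 1)"

definition relax_optimal :: "nat \<Rightarrow> nat \<Rightarrow> (nat \<Rightarrow> real^'m) \<Rightarrow> (nat \<Rightarrow> real) \<Rightarrow> real \<Rightarrow> bool" where
  "relax_optimal n k a xh wh \<longleftrightarrow>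
     relax_feasible n k a xh wh \<and> (\<forall>x w. relax_feasible n k a x w \<longrightarrow> w \<le> wh)"

definition pos_corr :: "nat \<Rightarrow> nat \<Rightarrow> real \<Rightarrow> (nat \<Rightarrow> real) \<Rightarrow> nat set pmf \<Rightarrow> bool" where
  "pos_corr n m \<alpha> x \<mu> \<longleftrightarrow>
     (\<forall>T. T \<subseteq> {1..n} \<and> card T = m \<longrightarrow>
        measure_pmf.prob \<mu> {S. T \<subseteq> S} \<ge> \<alpha> ^ m * (\<Prod>i\<in>T. x i))"

end

theory Submission
  imports Defs
begin

text \<open>
  By the Cauchy-Binet formula, \<open>det (\<Sum>i\<in>I. x\<^sub>i a\<^sub>i a\<^sub>i\<^sup>T)\<close> is the sum, over all \<open>m\<close>-subsets
  \<open>T \<subseteq> I\<close>, of \<open>\<Prod>i\<in>T. x\<^sub>i\<close> times the square of the determinant of the matrix with rows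
  \<open>a\<^sub>i\<close>, \<open>i \<in> T\<close>.  With \<open>x\<close> the indicator of \<open>S\<close> this gives
  \<open>E det (\<Sum>i\<in>\<S>. a\<^sub>i a\<^sub>i\<^sup>T) = \<Sum>\<^sub>T det\<^sup>2 \<cdot> Pr[T \<subseteq> \<S>]\<close>, and since the coefficients are
  nonnegative, positive correlation bounds this below by \<open>\<alpha>\<^sup>m det (\<Sum>i. x\<^sub>i a\<^sub>i a\<^sub>i\<^sup>T) \<ge> (\<alpha> w)\<^sup>m\<close>
  for the optimal relaxed solution.  Finally \<open>w \<ge> w\<^sup>*\<close>, because indicator vectors of
  \<open>k\<close>-subsets are feasible for the relaxation.
\<close>

lemma det_rows_sum:
  fixes a :: "'n::finite \<Rightarrow> 'b \<Rightarrow> 'a::comm_ring_1^'n"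
  assumes "finite S"
  shows "det (\<chi> i. \<Sum>j\<in>S. a i j) = (\<Sum>f\<in>PiE UNIV (\<lambda>_. S). det (\<chi> i. a i (f i)))"
proof -
  have "det (\<chi> i. \<Sum>j\<in>S. a i j) =
      (\<Sum>p | p permutes UNIV. of_int (sign p) * (\<Sum>f\<in>PiE UNIV (\<lambda>_. S). \<Prod>i\<in>UNIV. a i (f i) $ p i))"
    using assms by (simp add: det_def prod_sum_PiE)
  also have "\<dots> = (\<Sum>f\<in>PiE UNIV (\<lambda>_. S). det (\<chi> i. a i (f i)))"
    by (simp add: det_def sum_distrib_left sum.swap[of _ "{p. p permutes UNIV}"])
  finally show ?thesis .
qed

definition row_selection_term :: "(nat \<Rightarrow> real^'m) \<Rightarrow> ('m \<Rightarrow> nat) \<Rightarrow> real" where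
  "row_selection_term a f = (\<Prod>r\<in>UNIV. a (f r) $ r) * det (\<chi> r. a (f r))"

text \<open>The Cauchy-Binet coefficient of the monomial \<open>\<Prod>i\<in>T. x\<^sub>i\<close>.\<close>
definition gram_minor :: "(nat \<Rightarrow> real^'m) \<Rightarrow> nat set \<Rightarrow> real" where
  "gram_minor a T = (\<Sum>f | range f = T. row_selection_term a f)"

lemma row_selection_term_not_inj:
  assumes "\<not> inj f"
  shows "row_selection_term a f = 0"
proof -
  from assms obtain i j where "f i = f j" "i \<noteq> j"
    unfolding inj_def by blast
  then have "det (\<chi> r. a (f r)) = 0"
    by (intro det_identical_rows[of i j]) (auto simp: row_def vec_eq_iff)
  then show ?thesis
    by (simp add: row_selection_term_def)
qed

lemma det_wmat_expansion:
  fixes a :: "nat \<Rightarrow> real^'m"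
  assumes "finite I"
  shows "det (wmat a I x) = (\<Sum>f\<in>PiE UNIV (\<lambda>_. I). (\<Prod>r\<in>UNIV. x (f r)) * row_selection_term a f)"
proof -
  have "wmat a I x = (\<chi> r. \<Sum>i\<in>I. (x i * a i $ r) *s a i)"
    by (simp add: vec_eq_iff wmat_def outer_def sum_component mult.assoc)
  then show ?thesis
    using assms
    by (simp add: det_rows_sum det_rows_mul row_selection_term_def prod.distrib mult.assoc)
qed

lemma det_wmat_Cauchy_Binet:
  fixes a :: "nat \<Rightarrow> real^'m"
  assumes fin: "finite I"
  shows "det (wmat a I x) = (\<Sum>T | T \<subseteq> I \<and> card T = CARD('m). (\<Prod>i\<in>T. x i) * gram_minor a T)"
proof -
  let ?P = "PiE (UNIV::'m set) (\<lambda>_. I)"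
  let ?Q = "{f\<in>?P. inj f}"
  let ?TT = "{T. T \<subseteq> I \<and> card T = CARD('m)}"
  have "det (wmat a I x) = (\<Sum>f\<in>?Q. (\<Prod>r\<in>UNIV. x (f r)) * row_selection_term a f)"
    unfolding det_wmat_expansion[OF fin] using fin
    by (intro sum.mono_neutral_right) (auto simp: finite_PiE row_selection_term_not_inj)
  also have "\<dots> = (\<Sum>T\<in>?TT. \<Sum>f | f \<in> ?Q \<and> range f = T. (\<Prod>r\<in>UNIV. x (f r)) * row_selection_term a f)"
  proof (rule sum.group[symmetric])
    show "finite ?Q" using fin by (simp add: finite_PiE)
    show "finite ?TT" using fin by (auto intro: finite_subset[of _ "Pow I"])
    show "range ` ?Q \<subseteq> ?TT"
      by (auto simp: PiE_def Pi_def inj_on_iff_eq_card[symmetric])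
  qed
  also have "\<dots> = (\<Sum>T\<in>?TT. (\<Prod>i\<in>T. x i) * gram_minor a T)"
  proof (rule sum.cong[OF refl])
    fix T assume T: "T \<in> ?TT"
    have fibre: "{f. f \<in> ?Q \<and> range f = T} = {f. range f = T}"
      using T by (auto simp: PiE_def Pi_def inj_on_iff_eq_card)
    have "(\<Prod>r\<in>UNIV. x (f r)) = (\<Prod>i\<in>T. x i)" if "range f = T" for f :: "'m \<Rightarrow> nat"
    proof -
      have "inj f" using that T by (simp add: inj_on_iff_eq_card)
      then show ?thesis using that prod.reindex[of f UNIV x] by simp
    qed
    then show "(\<Sum>f | f \<in> ?Q \<and> range f = T. (\<Prod>r\<in>UNIV. x (f r)) * row_selection_term a f)
        = (\<Prod>i\<in>T. x i) * gram_minor a T"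
      unfolding fibre gram_minor_def sum_distrib_left by (intro sum.cong) auto
  qed
  finally show ?thesis .
qed

lemma gram_minor_eq_det_square:
  fixes a :: "nat \<Rightarrow> real^'m"
  assumes \<sigma>: "bij_betw \<sigma> (UNIV :: 'm set) T"
  shows "gram_minor a T = (det (\<chi> r. a (\<sigma> r)))\<^sup>2"
proof -
  define B where "B = (\<chi> r. a (\<sigma> r))"
  let ?PU = "{p::'m\<Rightarrow>'m. p permutes UNIV}"
  have inj_\<sigma>: "inj \<sigma>" and range_\<sigma>: "range \<sigma> = T"
    using \<sigma> by (auto simp: bij_betw_def)
  have "{f::'m\<Rightarrow>nat. range f = T} = (\<lambda>p. \<sigma> \<circ> p) ` ?PU"
  proof (intro equalityI subsetI)
    fix f :: "'m \<Rightarrow> nat" assume "f \<in> {f. range f = T}"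
    then have range_f: "range f = range \<sigma>" by (simp add: range_\<sigma>)
    define p where "p = inv \<sigma> \<circ> f"
    have "f x \<in> range \<sigma>" for x
      using range_f by blast
    then have \<sigma>_p: "\<sigma> \<circ> p = f"
      unfolding p_def by (simp add: fun_eq_iff f_inv_into_f)
    have "card (range f) = CARD('m)"
      using range_f inj_\<sigma> by (simp add: card_image)
    then have "inj (\<sigma> \<circ> p)"
      unfolding \<sigma>_p by (rule inj_on_iff_eq_card[THEN iffD2, rotated]) simp
    then have "inj p"
      by (rule inj_on_imageI2)
    then have "bij p"
      by (simp add: bij_def finite_UNIV_inj_surj)
    then have "p permutes UNIV"
      by (simp add: permutes_univ bij_iff)
    then show "f \<in> (\<lambda>p. \<sigma> \<circ> p) ` ?PU"
      using \<sigma>_p by blast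
  next
    fix f assume "f \<in> (\<lambda>p. \<sigma> \<circ> p) ` ?PU"
    then obtain p where p: "p permutes UNIV" and "f = \<sigma> \<circ> p"
      by blast
    then have "range f = range \<sigma>"
      by (metis image_comp permutes_image[OF p])
    then show "f \<in> {f. range f = T}"
      by (simp add: range_\<sigma>)
  qed
  moreover have "inj_on (\<lambda>p. \<sigma> \<circ> p) ?PU"
    using inj_\<sigma> unfolding inj_on_def fun_eq_iff o_def by blast
  ultimately have "gram_minor a T = (\<Sum>p\<in>?PU. row_selection_term a (\<sigma> \<circ> p))"
    unfolding gram_minor_def by (simp add: sum.reindex)
  also have "\<dots> = (\<Sum>p\<in>?PU. det B * (of_int (sign p) * (\<Prod>r\<in>UNIV. transpose B $ r $ p r)))"
  proof (rule sum.cong[OF refl])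
    fix p assume "p \<in> ?PU"
    then have "det (\<chi> r. B $ p r) = of_int (sign p) * det B"
      by (intro det_permute_rows) simp
    then show "row_selection_term a (\<sigma> \<circ> p) = det B * (of_int (sign p) * (\<Prod>r\<in>UNIV. transpose B $ r $ p r))"
      by (simp add: row_selection_term_def B_def transpose_def)
  qed
  also have "\<dots> = det B * det (transpose B)"
    by (simp add: det_def sum_distrib_left)
  finally show ?thesis
    by (simp add: det_transpose power2_eq_square B_def)
qed

lemma gram_minor_nonneg:
  fixes a :: "nat \<Rightarrow> real^'m"
  assumes "card T = CARD('m)"
  shows "0 \<le> gram_minor a T"
proof -
  have "finite T"
    using assms by (metis card.infinite zero_less_card_finite less_irrefl)
  then obtain \<sigma> :: "'m \<Rightarrow> nat" where "bij_betw \<sigma> UNIV T"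
    using assms finite_same_card_bij[OF finite_class.finite_UNIV] by metis
  then show ?thesis
    by (simp add: gram_minor_eq_det_square)
qed

lemma wmat_indicator:
  assumes "finite I" and "S \<subseteq> I"
  shows "wmat a I (indicator S) = smat a S"
  unfolding wmat_def smat_def using assms
  by (intro sum.mono_neutral_cong_right) (auto simp: indicator_def)

lemma expectation_det_smat:
  fixes a :: "nat \<Rightarrow> real^'m" and \<mu> :: "nat set pmf"
  assumes fin: "finite I" and supp: "set_pmf \<mu> \<subseteq> Pow I"
  shows "measure_pmf.expectation \<mu> (\<lambda>S. det (smat a S))
       = (\<Sum>T | T \<subseteq> I \<and> card T = CARD('m). gram_minor a T * measure_pmf.prob \<mu> {S. T \<subseteq> S})"
proof -
  let ?TT = "{T. T \<subseteq> I \<and> card T = CARD('m)}"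
  have "det (smat a S) = (\<Sum>T\<in>?TT. gram_minor a T * indicator {S. T \<subseteq> S} S)"
    if "S \<in> set_pmf \<mu>" for S
  proof -
    have "S \<subseteq> I" using that supp by auto
    then have "det (smat a S) = det (wmat a I (indicator S))"
      using fin by (simp add: wmat_indicator)
    also have "\<dots> = (\<Sum>T\<in>?TT. (\<Prod>i\<in>T. indicator S i) * gram_minor a T)"
      using fin by (rule det_wmat_Cauchy_Binet)
    also have "\<dots> = (\<Sum>T\<in>?TT. gram_minor a T * indicator {S. T \<subseteq> S} S)"
    proof (rule sum.cong[OF refl])
      fix T assume "T \<in> ?TT"
      then have "finite T" using fin finite_subset by blast
      then have "(\<Prod>i\<in>T. indicator S i) = (indicator {S. T \<subseteq> S} S :: real)"
        by (auto simp: indicator_def subset_iff)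
      then show "(\<Prod>i\<in>T. indicator S i) * gram_minor a T = gram_minor a T * indicator {S. T \<subseteq> S} S"
        by simp
    qed
    finally show ?thesis .
  qed
  then have "measure_pmf.expectation \<mu> (\<lambda>S. det (smat a S))
      = measure_pmf.expectation \<mu> (\<lambda>S. \<Sum>T\<in>?TT. gram_minor a T * indicator {S. T \<subseteq> S} S)"
    by (intro integral_cong_AE) (auto simp: AE_measure_pmf_iff)
  also have "\<dots> = (\<Sum>T\<in>?TT. gram_minor a T * measure_pmf.prob \<mu> {S. T \<subseteq> S})"
    using finite_subset[OF supp] fin
    by (subst Bochner_Integration.integral_sum)
       (auto intro: integrable_measure_pmf_finite simp del: sum_mult_indicator)
  finally show ?thesis .
qed

lemma expectation_det_smat_ge_pos_corr:
  fixes a :: "nat \<Rightarrow> real^'m" and \<mu> :: "nat set pmf"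
  assumes supp: "set_pmf \<mu> \<subseteq> Pow {1..n}" and corr: "pos_corr n CARD('m) \<alpha> x \<mu>"
  shows "\<alpha> ^ CARD('m) * det (wmat a {1..n} x) \<le> measure_pmf.expectation \<mu> (\<lambda>S. det (smat a S))"
proof -
  have "\<alpha> ^ CARD('m) * det (wmat a {1..n} x)
      = (\<Sum>T | T \<subseteq> {1..n} \<and> card T = CARD('m). gram_minor a T * (\<alpha> ^ CARD('m) * (\<Prod>i\<in>T. x i)))"
    by (simp add: det_wmat_Cauchy_Binet sum_distrib_left mult_ac)
  also have "\<dots> \<le> (\<Sum>T | T \<subseteq> {1..n} \<and> card T = CARD('m). gram_minor a T * measure_pmf.prob \<mu> {S. T \<subseteq> S})"
    using corr unfolding pos_corr_def
    by (intro sum_mono mult_left_mono gram_minor_nonneg) auto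
  also have "\<dots> = measure_pmf.expectation \<mu> (\<lambda>S. det (smat a S))"
    using supp by (intro expectation_det_smat[symmetric]) auto
  finally show ?thesis .
qed

lemma wstar_le_relax_optimal:
  fixes a :: "nat \<Rightarrow> real^'m"
  assumes "k \<le> n" and opt: "relax_optimal n k a xh wh"
  shows "wstar n k a \<le> wh"
proof -
  let ?A = "{S. S \<subseteq> {1..n} \<and> card S = k}"
  have "root CARD('m) (det (smat a S)) \<le> wh" if S: "S \<in> ?A" for S
  proof -
    have "wmat a {1..n} (indicator S) = smat a S"
      using S by (simp add: wmat_indicator)
    moreover have "(\<Sum>i\<in>{1..n}. indicator S i) = real k"
      using S by (simp add: indicator_def sum.If_cases Int_absorb1)
    ultimately have "relax_feasible n k a (indicator S) (root CARD('m) (det (smat a S)))"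
      by (simp add: relax_feasible_def indicator_def)
    then show ?thesis
      using opt by (simp add: relax_optimal_def)
  qed
  moreover have "finite ?A"
    by (auto intro: finite_subset[of _ "Pow {1..n}"])
  moreover have "?A \<noteq> {}"
    using assms(1) by (auto intro!: exI[of _ "{1..k}"])
  ultimately show ?thesis
    unfolding wstar_def setcompr_eq_image by (subst Max_le_iff) auto
qed

theorem lemma1:
  fixes n k :: nat and a :: "nat \<Rightarrow> real^'m" and xh :: "nat \<Rightarrow> real" and wh \<alpha> :: real
    and \<mu> :: "nat set pmf"
  assumes "CARD('m) \<le> k" and "k \<le> n"
    and "relax_optimal n k a xh wh"
    and "0 < \<alpha>" and "\<alpha> \<le> 1"
    and "set_pmf \<mu> \<subseteq> {S. S \<subseteq> {1..n} \<and> card S = k}"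
    and "pos_corr n CARD('m) \<alpha> xh \<mu>"
  shows "root CARD('m) (measure_pmf.expectation \<mu> (\<lambda>S. det (smat a S))) \<ge> \<alpha> * wstar n k a"
proof -
  let ?m = "CARD('m)" and ?D = "det (wmat a {1..n} xh)"
  have "\<alpha> * wstar n k a \<le> \<alpha> * wh"
    using assms(2,3,4) by (simp add: wstar_le_relax_optimal)
  also have "\<dots> \<le> \<alpha> * root ?m ?D"
    using assms(3,4) by (simp add: relax_optimal_def relax_feasible_def)
  also have "\<dots> = root ?m (\<alpha> ^ ?m * ?D)"
    using assms(4) by (simp add: real_root_mult real_root_power_cancel)
  also have "\<dots> \<le> root ?m (measure_pmf.expectation \<mu> (\<lambda>S. det (smat a S)))"
    using assms(6,7) by (intro real_root_le_mono expectation_det_smat_ge_pos_corr) auto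
  finally show ?thesis .
qed

end
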